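(* Let $w_1=(x_2'-x_2)y_1-(x_1'-x_1)y_2$ and $w_2=(x_2'-x_2)y_1'-(x_1'-x_1)y_2'$, and let $J=\{f\in K[X;Y]: fw_1=0\}\cap\{f\in K[X;Y]: fw_2=0\}$. Then $J$, viewed as a $K[X]$-module, is spanned by $h_1,h_2,h_3,h_4$, where $h_1=y_1y_2y_1'y_2'$, $h_2=y_1y_2\big(y_1'(x_2'-x_2)-y_2'(x_1'-x_1)\big)$, $h_3=y_1'y_2'\big(y_1(x_2'-x_2)-y_2(x_1'-x_1)\big)$, $h_4=\big(y_1'(x_2'-x_2)-y_2'(x_1'-x_1)\big)\big(y_1(x_2'-x_2)-y_2(x_1'-x_1)\big)$.
   Context: $K$ is an infinite field of characteristic different from 2. Let $X=\{x_1,x_2,x_1',x_2'\}$ and $Y=\{y_1,y_2,y_1',y_2'\}$, and let $K[X;Y]\cong K[X]\otimes_K E(Y)$ be the free supercommutative algebra: the $x$'s are even commuting variables, the $y$'s are odd pairwise anticommuting variables, and $E(Y)$ is the Grassmann algebra on the vector space with basis $Y$. $K[X]$ is the polynomial subalgebra in $X$. *)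

theory Defs
  imports "HOL-Computational_Algebra.Polynomial"
begin

text \<open>K[X] = K[x1,x2,x1',x2'] rendered as an iterated univariate polynomial ring.\<close>
type_synonym 'k px = "'k poly poly poly poly"

definition X1 :: "'k::comm_ring_1 px" where "X1 = [:0, 1:]"
definition X2 :: "'k::comm_ring_1 px" where "X2 = [:[:0, 1:]:]"
definition X1' :: "'k::comm_ring_1 px" where "X1' = [:[:[:0, 1:]:]:]"
definition X2' :: "'k::comm_ring_1 px" where "X2' = [:[:[:[:0, 1:]:]:]:]"

text \<open>K[X;Y] = K[X] \<otimes> E(Y): an element is a family of K[X]-coefficients indexed by the
  subsets S of the odd indices {0,1,2,3} (0 = y1, 1 = y2, 2 = y1', 3 = y2'); the coefficient
  of S is the coefficient of the ordered Grassmann monomial y_{s1} ... y_{sk}, s1 < ... < sk.\<close>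
type_synonym 'k sa = "nat set \<Rightarrow> 'k px"

definition sa_carrier :: "'k::comm_ring_1 sa set" where
  "sa_carrier = {f. \<forall>S. \<not> S \<subseteq> {0..<4} \<longrightarrow> f S = 0}"

definition inv_count :: "nat set \<Rightarrow> nat set \<Rightarrow> nat" where
  "inv_count A B = card {(a, b). a \<in> A \<and> b \<in> B \<and> b < a}"

definition sa_mult :: "'k::comm_ring_1 sa \<Rightarrow> 'k sa \<Rightarrow> 'k sa" where
  "sa_mult f g = (\<lambda>S. if S \<subseteq> {0..<4} then
      (\<Sum>A\<in>Pow S. (-1) ^ inv_count A (S - A) * f A * g (S - A)) else 0)"

definition sa_add :: "'k::comm_ring_1 sa \<Rightarrow> 'k sa \<Rightarrow> 'k sa" where
  "sa_add f g = (\<lambda>S. f S + g S)"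

definition sa_diff :: "'k::comm_ring_1 sa \<Rightarrow> 'k sa \<Rightarrow> 'k sa" where
  "sa_diff f g = (\<lambda>S. f S - g S)"

definition sa_zero :: "'k::comm_ring_1 sa" where
  "sa_zero = (\<lambda>S. 0)"

definition sa_smult :: "'k::comm_ring_1 px \<Rightarrow> 'k sa \<Rightarrow> 'k sa" where
  "sa_smult c f = (\<lambda>S. c * f S)"

definition sa_const :: "'k::comm_ring_1 px \<Rightarrow> 'k sa" where
  "sa_const p = (\<lambda>S. if S = {} then p else 0)"

definition sa_gen :: "nat \<Rightarrow> 'k::comm_ring_1 sa" where
  "sa_gen i = (\<lambda>S. if S = {i} then 1 else 0)"

abbreviation Y1 :: "'k::comm_ring_1 sa" where "Y1 \<equiv> sa_gen 0"
abbreviation Y2 :: "'k::comm_ring_1 sa" where "Y2 \<equiv> sa_gen 1"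
abbreviation Y1' :: "'k::comm_ring_1 sa" where "Y1' \<equiv> sa_gen 2"
abbreviation Y2' :: "'k::comm_ring_1 sa" where "Y2' \<equiv> sa_gen 3"

definition W1 :: "'k::comm_ring_1 sa" where
  "W1 = sa_diff (sa_mult (sa_const (X2' - X2)) Y1) (sa_mult (sa_const (X1' - X1)) Y2)"
definition W2 :: "'k::comm_ring_1 sa" where
  "W2 = sa_diff (sa_mult (sa_const (X2' - X2)) Y1') (sa_mult (sa_const (X1' - X1)) Y2')"

definition J :: "'k::comm_ring_1 sa set" where
  "J = {f \<in> sa_carrier. sa_mult f W1 = sa_zero} \<inter> {f \<in> sa_carrier. sa_mult f W2 = sa_zero}"

definition H1 :: "'k::comm_ring_1 sa" where
  "H1 = sa_mult (sa_mult (sa_mult Y1 Y2) Y1') Y2'"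
definition H2 :: "'k::comm_ring_1 sa" where
  "H2 = sa_mult (sa_mult Y1 Y2)
          (sa_diff (sa_mult Y1' (sa_const (X2' - X2))) (sa_mult Y2' (sa_const (X1' - X1))))"
definition H3 :: "'k::comm_ring_1 sa" where
  "H3 = sa_mult (sa_mult Y1' Y2')
          (sa_diff (sa_mult Y1 (sa_const (X2' - X2))) (sa_mult Y2 (sa_const (X1' - X1))))"
definition H4 :: "'k::comm_ring_1 sa" where
  "H4 = sa_mult
          (sa_diff (sa_mult Y1' (sa_const (X2' - X2))) (sa_mult Y2' (sa_const (X1' - X1))))
          (sa_diff (sa_mult Y1 (sa_const (X2' - X2))) (sa_mult Y2 (sa_const (X1' - X1))))"

end

theory Submission
  imports Defs
begin

text \<open>Write \<open>a = x\<^sub>2' - x\<^sub>2\<close> and \<open>b = x\<^sub>1' - x\<^sub>1\<close>, so that \<open>w\<^sub>1 = a y\<^sub>1 - b y\<^sub>2\<close> and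
  \<open>w\<^sub>2 = a y\<^sub>1' - b y\<^sub>2'\<close>. Expanding \<open>f\<close> in the sixteen Grassmann monomials, the conditions
  \<open>f w\<^sub>1 = 0\<close> and \<open>f w\<^sub>2 = 0\<close> become \<open>K[X]\<close>-linear relations among the coefficients of \<open>f\<close>:
  they kill the coefficients of degree at most one and those of \<open>y\<^sub>1y\<^sub>2\<close> and \<open>y\<^sub>1'y\<^sub>2'\<close>, and
  leave relations of the shape \<open>u a = v b\<close> in degrees two and three. Since \<open>a\<close> is coprime
  to \<open>b\<close> (it is free of \<open>x\<^sub>1\<close>, while \<open>b\<close> is linear in \<open>x\<^sub>1\<close> with unit leading coefficient),
  every such relation forces \<open>u = c b\<close> and \<open>v = c a\<close>, which produces exactly the
  coefficients of \<open>h\<^sub>2, h\<^sub>3, h\<^sub>4\<close>; the top coefficient is free and gives \<open>h\<^sub>1\<close>.\<close>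

definition sa_monom :: "nat set \<Rightarrow> 'k::comm_ring_1 px \<Rightarrow> 'k sa" where
  "sa_monom T c = (\<lambda>S. if S = T then c else 0)"

lemma sa_const_eq_monom: "sa_const p = sa_monom {} p"
  by (simp add: sa_const_def sa_monom_def)

lemma sa_gen_eq_monom: "sa_gen i = sa_monom {i} 1"
  by (simp add: sa_gen_def sa_monom_def)

lemma inv_count_singleton_right: "inv_count A {b} = card (A \<inter> {b<..})"
proof -
  have "{(x, y). x \<in> A \<and> y \<in> {b} \<and> y < x} = (\<lambda>x. (x, b)) ` (A \<inter> {b<..})" by auto
  then show ?thesis unfolding inv_count_def by (simp add: card_image inj_on_def)
qed

lemma inv_count_empty [simp]: "inv_count {} B = 0" "inv_count A {} = 0"
  by (simp_all add: inv_count_def)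

lemma sa_mult_monom:
  assumes "T \<inter> U = {}" "T \<union> U \<subseteq> {0..<4}"
  shows "sa_mult (sa_monom T c) (sa_monom U d) = sa_monom (T \<union> U) ((-1) ^ inv_count T U * c * d)"
proof
  fix S :: "nat set"
  show "sa_mult (sa_monom T c) (sa_monom U d) S = sa_monom (T \<union> U) ((-1) ^ inv_count T U * c * d) S"
  proof (cases "S \<subseteq> {0..<4}")
    case True
    have "sa_mult (sa_monom T c) (sa_monom U d) S = (\<Sum>A\<in>Pow S. if A = T then
        (if S - T = U then (-1) ^ inv_count T U * c * d else 0) else 0)"
      unfolding sa_mult_def sa_monom_def if_P[OF True] by (rule sum.cong) auto
    also have "\<dots> = sa_monom (T \<union> U) ((-1) ^ inv_count T U * c * d) S"
      using True assms finite_subset[OF True] by (auto simp: sa_monom_def)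
    finally show ?thesis .
  qed (use assms in \<open>auto simp: sa_mult_def sa_monom_def\<close>)
qed

lemma sa_mult_monom_singleton_right:
  assumes "S \<subseteq> {0..<4}"
  shows "sa_mult f (sa_monom {i} c) S =
    (if i \<in> S then (-1) ^ card ((S - {i}) \<inter> {i<..}) * f (S - {i}) * c else 0)"
proof -
  have "sa_mult f (sa_monom {i} c) S = (\<Sum>A\<in>Pow S. if A = S - {i} then
      (if i \<in> S then (-1) ^ inv_count (S - {i}) {i} * f (S - {i}) * c else 0) else 0)"
    unfolding sa_mult_def sa_monom_def if_P[OF assms] by (rule sum.cong) auto
  then show ?thesis
    using finite_subset[OF assms] by (simp add: inv_count_singleton_right)
qed

lemma sa_mult_diff_right: "sa_mult f (sa_diff g h) = sa_diff (sa_mult f g) (sa_mult f h)"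
  unfolding sa_mult_def sa_diff_def by (auto simp: algebra_simps sum_subtractf)

lemma sa_mult_diff_left: "sa_mult (sa_diff f g) h = sa_diff (sa_mult f h) (sa_mult g h)"
  unfolding sa_mult_def sa_diff_def by (auto simp: algebra_simps sum_subtractf)

abbreviation dx2 :: "'k::comm_ring_1 px" where "dx2 \<equiv> X2' - X2"
abbreviation dx1 :: "'k::comm_ring_1 px" where "dx1 \<equiv> X1' - X1"

lemma W1_eq: "W1 = sa_diff (sa_monom {0} dx2) (sa_monom {1} dx1)"
  unfolding W1_def sa_const_eq_monom sa_gen_eq_monom by (simp add: sa_mult_monom)

lemma W2_eq: "W2 = sa_diff (sa_monom {2} dx2) (sa_monom {3} dx1)"
  unfolding W2_def sa_const_eq_monom sa_gen_eq_monom by (simp add: sa_mult_monom)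

lemma H1_eq: "H1 = sa_monom {0,1,2,3} 1"
  unfolding H1_def sa_gen_eq_monom
  by (simp add: sa_mult_monom inv_count_singleton_right insert_commute)

lemma H2_eq: "H2 = sa_diff (sa_monom {0,1,2} dx2) (sa_monom {0,1,3} dx1)"
  unfolding H2_def sa_gen_eq_monom sa_const_eq_monom
  by (simp add: sa_mult_monom sa_mult_diff_right inv_count_singleton_right insert_commute)

lemma H3_eq: "H3 = sa_diff (sa_monom {0,2,3} dx2) (sa_monom {1,2,3} dx1)"
  unfolding H3_def sa_gen_eq_monom sa_const_eq_monom
  by (simp add: sa_mult_monom sa_mult_diff_right inv_count_singleton_right insert_commute)

lemma H4_eq: "H4 = sa_diff (sa_diff (sa_monom {0,2} (- dx2 * dx2)) (sa_monom {0,3} (- dx1 * dx2)))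
      (sa_diff (sa_monom {1,2} (- dx2 * dx1)) (sa_monom {1,3} (- dx1 * dx1)))"
  unfolding H4_def sa_gen_eq_monom sa_const_eq_monom
  by (simp add: sa_mult_monom sa_mult_diff_right sa_mult_diff_left inv_count_singleton_right insert_commute)

lemma sa_mult_W1_apply:
  assumes "S \<subseteq> {0..<4}"
  shows "sa_mult f W1 S =
    (if 0 \<in> S then (-1) ^ card ((S - {0}) \<inter> {0<..}) * f (S - {0}) * dx2 else 0) -
    (if 1 \<in> S then (-1) ^ card ((S - {1}) \<inter> {1<..}) * f (S - {1}) * dx1 else 0)"
  unfolding W1_eq sa_mult_diff_right by (simp add: sa_diff_def sa_mult_monom_singleton_right[OF assms])

lemma sa_mult_W2_apply:
  assumes "S \<subseteq> {0..<4}"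
  shows "sa_mult f W2 S =
    (if 2 \<in> S then (-1) ^ card ((S - {2}) \<inter> {2<..}) * f (S - {2}) * dx2 else 0) -
    (if 3 \<in> S then (-1) ^ card ((S - {3}) \<inter> {3<..}) * f (S - {3}) * dx1 else 0)"
  unfolding W2_eq sa_mult_diff_right by (simp add: sa_diff_def sa_mult_monom_singleton_right[OF assms])

lemma const_poly_dvd_mult_linear:
  fixes c e u :: "'a::{comm_ring_1,semiring_no_zero_divisors}"
  assumes "u dvd 1" and "[:c:] dvd v * [:e, u:]"
  shows "[:c:] dvd v"
proof -
  obtain w where "1 = u * w" using assms(1) by (rule dvdE)
  then have cancel_u: "c dvd x" if "c dvd u * x" for x
    using dvd_mult[OF that, of w] by (metis mult.assoc mult.commute mult_1)
  have coeff_Suc: "c dvd e * coeff v (Suc n) + u * coeff v n" for n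
  proof -
    have "c dvd coeff (v * [:e, u:]) (Suc n)"
      using assms(2) const_poly_dvd_iff by blast
    then show ?thesis by (simp add: ac_simps)
  qed
  have "c dvd coeff v n" if "n \<le> degree v" for n
    using that
  proof (induction n rule: inc_induct)
    case base
    have "c dvd u * coeff v (degree v)"
      using coeff_Suc[of "degree v"] by (simp add: coeff_eq_0)
    then show ?case by (rule cancel_u)
  next
    case (step n)
    have "c dvd u * coeff v n"
      using dvd_diff[OF coeff_Suc[of n] dvd_mult[OF step.IH, of e]] by simp
    then show ?case by (rule cancel_u)
  qed
  then have "c dvd coeff v n" for n
    by (cases "n \<le> degree v") (auto simp: coeff_eq_0)
  then show ?thesis by (simp add: const_poly_dvd_iff)
qed

lemma dx2_eq_const: "(dx2 :: 'k::comm_ring_1 px) = [: [:[:[:0, 1:]:]:] - [:0, 1:] :]"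
  by (simp add: X2_def X2'_def)

lemma dx1_eq_linear: "(dx1 :: 'k::comm_ring_1 px) = [: [:[:0, 1:]:], -1 :]"
  by (simp add: X1_def X1'_def)

lemma dx2_nonzero: "(dx2 :: 'k::idom px) \<noteq> 0"
  by (simp add: X2_def X2'_def)

lemma dx2_dvd_mult_dx1_imp_dvd: "(dx2 :: 'k::idom px) dvd v * dx1 \<Longrightarrow> dx2 dvd v"
  unfolding dx2_eq_const dx1_eq_linear by (rule const_poly_dvd_mult_linear[of "-1"]) simp_all

lemma cross_mult_eq_imp_common_factor:
  fixes a b u v :: "'a::idom"
  assumes "a \<noteq> 0" and coprime: "\<And>w. a dvd w * b \<Longrightarrow> a dvd w" and "u * a = v * b"
  shows "\<exists>c. u = c * b \<and> v = c * a"
proof -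
  have "a dvd v * b" using assms(3) by (metis dvd_triv_right)
  then have "a dvd v" by (rule coprime)
  then obtain c where v: "v = c * a" by (metis dvd_def mult.commute)
  with assms(1,3) have "u = c * b"
    by (metis mult.assoc mult.commute mult_right_cancel)
  with v show ?thesis by blast
qed

lemma syzygies_of_two_cross_relations:
  fixes a b p q r s :: "'a::idom"
  assumes "a \<noteq> 0" and "\<And>w. a dvd w * b \<Longrightarrow> a dvd w"
    and "r * a + p * b = 0" "s * a + q * b = 0" "q * a + p * b = 0" "s * a + r * b = 0"
  shows "\<exists>c. p = - c * a * a \<and> q = c * a * b \<and> r = c * a * b \<and> s = - c * b * b"
proof -
  have "r * a = q * a" using assms(3,5) by (simp add: eq_neg_iff_add_eq_0[symmetric])
  then have r_eq_q: "r = q" using assms(1) by simp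
  have "r * a = (- p) * b" using assms(3) by (simp add: eq_neg_iff_add_eq_0)
  then obtain c where r: "r = c * b" and p: "- p = c * a"
    using cross_mult_eq_imp_common_factor[OF assms(1,2)] by blast
  have "s * a = (- c * b) * b" using assms(4) r r_eq_q by (simp add: eq_neg_iff_add_eq_0)
  then obtain d where s: "s = d * b" and cd: "- c * b = d * a"
    using cross_mult_eq_imp_common_factor[OF assms(1,2)] by blast
  have "(- d) * a = c * b" by (simp add: cd[symmetric])
  then obtain e where d: "- d = e * b" and c: "c = e * a"
    using cross_mult_eq_imp_common_factor[OF assms(1,2)] by blast
  have p': "p = - (c * a)" by (simp add: p[symmetric])
  have d': "d = - (e * b)" by (simp add: d[symmetric])
  show ?thesis
  proof (intro exI conjI)
    show "p = - e * a * a" using p' c by simp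
    show "q = e * a * b" using r r_eq_q c by simp
    show "r = e * a * b" using r c by simp
    show "s = - e * b * b" using s d' by (simp add: ac_simps)
  qed
qed

lemma subset_atLeastLessThan_4_cases:
  assumes "S \<subseteq> {0..<4::nat}"
  shows "S = {} \<or> S = {0} \<or> S = {1} \<or> S = {2} \<or> S = {3} \<or> S = {0,1} \<or> S = {0,2} \<or> S = {0,3}
    \<or> S = {1,2} \<or> S = {1,3} \<or> S = {2,3} \<or> S = {0,1,2} \<or> S = {0,1,3} \<or> S = {0,2,3}
    \<or> S = {1,2,3} \<or> S = {0,1,2,3}"
proof -
  have "x = 0 \<or> x = 1 \<or> x = 2 \<or> x = 3" if "x \<in> S" for x
    using assms that by auto
  then have "S = (if 3 \<in> S then {3} else {}) \<union> (if 2 \<in> S then {2} else {})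
      \<union> (if 1 \<in> S then {1} else {}) \<union> (if 0 \<in> S then {0} else {})"
    by auto
  then obtain b0 b1 b2 b3 where "S = (if b3 then {3} else {}) \<union> (if b2 then {2} else {})
      \<union> (if b1 then {1} else {}) \<union> (if b0 then {0} else {})"
    by blast
  then show ?thesis by (cases b0; cases b1; cases b2; cases b3) simp_all
qed

lemma sa_monom_apply: "sa_monom T c S = (if S \<subseteq> T \<and> T \<subseteq> S then c else 0)"
  by (auto simp: sa_monom_def)

lemma mem_J_iff:
  "f \<in> J \<longleftrightarrow> f \<in> sa_carrier \<and> (\<forall>S \<subseteq> {0..<4}. sa_mult f W1 S = 0 \<and> sa_mult f W2 S = 0)"
  by (auto simp: J_def sa_zero_def fun_eq_iff sa_mult_def)

abbreviation H_comb :: "'k::comm_ring_1 px \<Rightarrow> 'k px \<Rightarrow> 'k px \<Rightarrow> 'k px \<Rightarrow> 'k sa" where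
  "H_comb c1 c2 c3 c4 \<equiv>
    sa_add (sa_add (sa_add (sa_smult c1 H1) (sa_smult c2 H2)) (sa_smult c3 H3)) (sa_smult c4 H4)"

lemma H_comb_apply:
  "H_comb c1 c2 c3 c4 S =
    c1 * sa_monom {0,1,2,3} 1 S
    + c2 * (sa_monom {0,1,2} dx2 S - sa_monom {0,1,3} dx1 S)
    + c3 * (sa_monom {0,2,3} dx2 S - sa_monom {1,2,3} dx1 S)
    + c4 * (sa_monom {0,2} (- dx2 * dx2) S - sa_monom {0,3} (- dx1 * dx2) S
            - (sa_monom {1,2} (- dx2 * dx1) S - sa_monom {1,3} (- dx1 * dx1) S))"
  by (simp add: sa_add_def sa_smult_def sa_diff_def H1_eq H2_eq H3_eq H4_eq)

lemma H_comb_mem_J: "H_comb c1 c2 c3 c4 \<in> J"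
proof -
  have "sa_mult (H_comb c1 c2 c3 c4) W1 S = 0 \<and> sa_mult (H_comb c1 c2 c3 c4) W2 S = 0"
    if S: "S \<subseteq> {0..<4}" for S
    using subset_atLeastLessThan_4_cases[OF S]
    unfolding sa_mult_W1_apply[OF S] sa_mult_W2_apply[OF S]
    by (elim disjE) (simp_all add: H_comb_apply sa_monom_apply insert_Diff_if algebra_simps)
  moreover have "H_comb c1 c2 c3 c4 \<in> sa_carrier"
    by (auto simp: sa_carrier_def H_comb_apply sa_monom_def)
  ultimately show ?thesis by (simp add: mem_J_iff)
qed

lemma mem_J_coeffs:
  fixes f :: "'k::idom sa"
  assumes "f \<in> J"
  shows "f {} = 0" "f {0} = 0" "f {1} = 0" "f {2} = 0" "f {3} = 0" "f {0,1} = 0" "f {2,3} = 0"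
    and "f {1,2} * dx2 + f {0,2} * dx1 = 0" "f {1,3} * dx2 + f {0,3} * dx1 = 0"
    and "f {0,3} * dx2 + f {0,2} * dx1 = 0" "f {1,3} * dx2 + f {1,2} * dx1 = 0"
    and "f {0,1,3} * dx2 + f {0,1,2} * dx1 = 0" "f {1,2,3} * dx2 + f {0,2,3} * dx1 = 0"
proof -
  have W1: "sa_mult f W1 S = 0" and W2: "sa_mult f W2 S = 0" if "S \<subseteq> {0..<4}" for S
    using assms that by (simp_all add: mem_J_iff)
  note simps = sa_mult_W1_apply sa_mult_W2_apply insert_Diff_if dx2_nonzero[simplified] neg_eq_iff_add_eq_0
  show "f {} = 0" using W1[of "{0}"] by (simp add: simps)
  show "f {0} = 0" using W2[of "{0,2}"] by (simp add: simps)
  show "f {2} = 0" using W1[of "{0,2}"] by (simp add: simps)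
  show "f {3} = 0" using W1[of "{0,3}"] by (simp add: simps)
  show "f {1} = 0" using W1[of "{0,1}"] W2[of "{0,2}"] by (simp add: simps)
  show "f {0,1} = 0" using W2[of "{0,1,2}"] by (simp add: simps)
  show "f {2,3} = 0" using W1[of "{0,2,3}"] by (simp add: simps)
  show "f {1,2} * dx2 + f {0,2} * dx1 = 0" using W1[of "{0,1,2}"] by (simp add: simps)
  show "f {1,3} * dx2 + f {0,3} * dx1 = 0" using W1[of "{0,1,3}"] by (simp add: simps)
  show "f {0,3} * dx2 + f {0,2} * dx1 = 0" using W2[of "{0,2,3}"] by (simp add: simps)
  show "f {1,3} * dx2 + f {1,2} * dx1 = 0" using W2[of "{1,2,3}"] by (simp add: simps)
  show "f {0,1,3} * dx2 + f {0,1,2} * dx1 = 0" using W2[of "{0,1,2,3}"] by (simp add: simps)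
  show "f {1,2,3} * dx2 + f {0,2,3} * dx1 = 0" using W1[of "{0,1,2,3}"] by (simp add: simps)
qed

lemma J_subset_H_span:
  fixes f :: "'k::idom sa"
  assumes "f \<in> J"
  shows "\<exists>c1 c2 c3 c4. f = H_comb c1 c2 c3 c4"
proof -
  note coeffs = mem_J_coeffs[OF assms]
  note coprime = dx2_nonzero dx2_dvd_mult_dx1_imp_dvd
  obtain c4 where c4: "f {0,2} = - c4 * dx2 * dx2" "f {0,3} = c4 * dx2 * dx1"
      "f {1,2} = c4 * dx2 * dx1" "f {1,3} = - c4 * dx1 * dx1"
    using syzygies_of_two_cross_relations[OF coprime coeffs(8-11)] by blast
  have "f {0,1,3} * dx2 = (- f {0,1,2}) * dx1"
    using coeffs(12) by (simp add: eq_neg_iff_add_eq_0)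
  then obtain c2 where c2: "f {0,1,3} = c2 * dx1" "- f {0,1,2} = c2 * dx2"
    using cross_mult_eq_imp_common_factor[OF coprime] by blast
  have "f {1,2,3} * dx2 = (- f {0,2,3}) * dx1"
    using coeffs(13) by (simp add: eq_neg_iff_add_eq_0)
  then obtain c3 where c3: "f {1,2,3} = c3 * dx1" "- f {0,2,3} = c3 * dx2"
    using cross_mult_eq_imp_common_factor[OF coprime] by blast
  have "f S = H_comb (f {0,1,2,3}) (- c2) (- c3) c4 S" for S
  proof (cases "S \<subseteq> {0..<4}")
    case True
    have "f {0,1,2} = - c2 * dx2" "f {0,2,3} = - c3 * dx2"
      by (simp_all add: c2(2)[symmetric] c3(2)[symmetric])
    moreover note subset_atLeastLessThan_4_cases[OF True]
    ultimately show ?thesis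
      by (elim disjE) (simp_all add: H_comb_apply sa_monom_apply coeffs(1-7)[simplified] c2(1)[simplified]
          c3(1)[simplified] c4[simplified] algebra_simps)
  next
    case False
    then show ?thesis
      using assms H_comb_mem_J[of "f {0,1,2,3}" "- c2" "- c3" c4]
      by (simp add: mem_J_iff sa_carrier_def)
  qed
  then show ?thesis by blast
qed

theorem proposition1:
  assumes "infinite (UNIV :: 'k::field set)"
    and "(2::'k) \<noteq> 0"
  shows "(J :: 'k sa set) =
    {sa_add (sa_add (sa_add (sa_smult c1 H1) (sa_smult c2 H2)) (sa_smult c3 H3)) (sa_smult c4 H4)
      | c1 c2 c3 c4. True}"
  using J_subset_H_span H_comb_mem_J by blast

end
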